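(* Let $\lambda\ge 1$ and let $A$ be an $m\times n$ rational matrix of full column rank. Consider the following procedure. Set $A^{(0)}=A$ and $\mathcal{B}=\emptyset$. For $k=1,\dots,n$: obtain a vector $b\in\operatorname{col}(A)\setminus\operatorname{span}(\mathcal{B})$ with $\|b\|_0\le\lambda\cdot\min\{\|a\|_0: a\in\operatorname{col}(A)\setminus\operatorname{span}(\mathcal{B})\}$, together with a column $a_j$ of $A^{(k-1)}$ that is not in $\mathcal{B}$ and such that replacing $a_j$ by $b$ preserves the column span; let $A^{(k)}$ be $A^{(k-1)}$ with $a_j$ replaced by $b$, and add $b$ to $\mathcal{B}$. Let $N$ be the matrix whose columns are the $n$ vectors in $\mathcal{B}$. Then $N=AX$ for some invertible $X$, and $\operatorname{nnz}(N)\le\lambda\cdot\min\{\operatorname{nnz}(AY): Y \text{ invertible}\}$; i.e. a $\lambda$-approximation oracle for sparsest independent vector yields a $\lambda$-approximation for matrix sparsification.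
   Context: $\|v\|_0$ is the number of nonzero entries of $v$, $\operatorname{nnz}(M)$ the number of nonzero entries of $M$, $\operatorname{col}(A)$ the column span, and $\operatorname{span}(\mathcal{B})$ the span of a set of vectors (the zero space if empty). Sparsest independent vector (SIV): given a full-column-rank matrix $A$ and a set $\mathcal{B}$ of columns of $A$, find $a\in\operatorname{col}(A)\setminus\operatorname{span}(\mathcal{B})$ minimizing $\|a\|_0$. *)

theory Defs
  imports "HOL-Analysis.Analysis"
begin

definition vnnz :: "'a::zero^'m \<Rightarrow> nat" where
  "vnnz v = card {i. v $ i \<noteq> 0}"

definition mnnz :: "'a::zero^'n^'m \<Rightarrow> nat" where
  "mnnz M = card {(i, j). M $ i $ j \<noteq> 0}"

definition colspace :: "'a::field^'n^'m \<Rightarrow> ('a^'m) set" where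
  "colspace A = vec.span (columns A)"

definition SIV_opt :: "'a::field^'n^'m \<Rightarrow> ('a^'m) set \<Rightarrow> nat" where
  "SIV_opt A B = Min {vnnz a | a. a \<in> colspace A - vec.span B}"

definition replace_col :: "'a^'n^'m \<Rightarrow> 'n \<Rightarrow> 'a^'m \<Rightarrow> 'a^'n^'m" where
  "replace_col M j b = (\<chi> i l. if l = j then b $ i else M $ i $ l)"

end

theory Submission
  imports Defs
begin

(* The greedy vectors b_1,...,b_n are linearly
   independent (each lies outside the span of its predecessors), so the matrix N with
   these columns is injective; since all of them lie in col(A), N = A X with X invertible.

   For the approximation bound, fix an optimal invertible Y and let M = A Y. The columns
   of M are n independent vectors of col(A). Sort them by their number of nonzeros,
   c_1,...,c_n. When b_k is chosen, span{b_1,...,b_{k-1}} has dimension < k, so one of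
   c_1,...,c_k lies outside it; hence the SIV optimum at step k is at most nnz(c_k).
   Summing over k gives  nnz(N) <= lam * sum_k SIV_k <= lam * nnz(M). *)

lemma column_eq_mult_axis:
  fixes M :: "'a::field^'n^'m"
  shows "M *v axis j 1 = column j M"
  by (simp add: vec_eq_iff matrix_vector_mult_def column_def axis_def if_distrib cong: if_cong)

lemma colspace_eq_range:
  fixes A :: "'a::field^'n^'m"
  shows "colspace A = range ((*v) A)"
proof
  show "colspace A \<subseteq> range ((*v) A)"
    unfolding colspace_def
  proof (rule vec.span_minimal)
    show "columns A \<subseteq> range ((*v) A)"
      unfolding columns_def by (auto simp flip: column_eq_mult_axis)
    show "vec.subspace (range ((*v) A))"
      using vec.linear_subspace_image[OF matrix_vector_mul_linear_gen vec.subspace_UNIV] by simp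
  qed
  show "range ((*v) A) \<subseteq> colspace A"
    unfolding colspace_def using matrix_vector_mult_in_columnspace_gen by blast
qed

lemma mnnz_eq_sum_columns:
  fixes M :: "'a::zero^'n::finite^'m::finite"
  shows "mnnz M = (\<Sum>j\<in>UNIV. vnnz (column j M))"
proof -
  have "{(i, j). M $ i $ j \<noteq> 0} = prod.swap ` (SIGMA j:UNIV. {i. M $ i $ j \<noteq> 0})"
    by auto
  hence "mnnz M = card (SIGMA j:UNIV. {i. M $ i $ j \<noteq> 0})"
    unfolding mnnz_def by (simp add: card_image)
  also have "\<dots> = (\<Sum>j\<in>UNIV. card {i. M $ i $ j \<noteq> 0})"
    by (simp add: card_SigmaI)
  finally show ?thesis by (simp add: vnnz_def column_def)
qed

lemma mnnz_eq_sum_column_set: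
  fixes M :: "'a::zero^'n::finite^'m::finite"
  assumes "inj (\<lambda>j. column j M)"
  shows "mnnz M = sum vnnz (columns M)"
proof -
  have "columns M = range (\<lambda>j. column j M)" unfolding columns_def by auto
  thus ?thesis using assms by (simp add: mnnz_eq_sum_columns sum.reindex)
qed

lemma full_rank_imp_inj:
  fixes A :: "'a::field^'n^'m"
  assumes "rank A = CARD('n)"
  shows "inj ((*v) A)"
proof -
  have "vec.span (rows A) = UNIV" using assms
    by (metis row_rank_def_gen vec_dim_card vec.dim_eq_full vec.dim_subset_UNIV vec.span_UNIV)
  thus ?thesis using matrix_left_invertible_span_rows_gen matrix_left_invertible_injective by blast
qed

lemma inj_iff_columns_independent:
  fixes M :: "'a::field^'n^'m"
  shows "inj ((*v) M) \<longleftrightarrow> inj (\<lambda>j. column j M) \<and> vec.independent (columns M)"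
proof -
  let ?c = "\<lambda>j. column j M"
  have colr: "columns M = range ?c" unfolding columns_def by auto
  have fin: "finite (columns M)" unfolding colr by simp
  have trivial_kernel:
    "inj ((*v) M) \<longleftrightarrow> (\<forall>c. (\<Sum>i\<in>UNIV. c i *s ?c i) = 0 \<longrightarrow> (\<forall>i. c i = 0))"
    using matrix_left_invertible_independent_columns[of M] matrix_left_invertible_injective[of M]
    by simp
  show ?thesis
  proof
    assume inj: "inj ((*v) M)"
    have ic: "inj ?c"
    proof (rule injI)
      fix i j assume "?c i = ?c j"
      hence "M *v axis i 1 = M *v axis j 1" by (simp add: column_eq_mult_axis)
      hence "axis i (1::'a) = axis j 1" using inj by (meson injD)
      thus "i = j" by (simp add: axis_eq_axis)
    qed
    have "vec.independent (columns M)"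
    proof
      assume "vec.dependent (columns M)"
      then obtain u where u: "\<exists>v\<in>columns M. u v \<noteq> 0" "(\<Sum>v\<in>columns M. u v *s v) = 0"
        using vec.dependent_finite[OF fin] by blast
      have "(\<Sum>i\<in>UNIV. u (?c i) *s ?c i) = 0"
        using u(2) unfolding colr by (simp add: sum.reindex[OF ic])
      moreover have kernel: "\<forall>c. (\<Sum>i\<in>UNIV. c i *s ?c i) = 0 \<longrightarrow> (\<forall>i. c i = 0)"
        using trivial_kernel inj by blast
      ultimately have "\<forall>i. u (?c i) = 0" using kernel[rule_format, of "\<lambda>i. u (?c i)"] by simp
      thus False using u(1) unfolding colr by auto
    qed
    with ic show "inj ?c \<and> vec.independent (columns M)" by blast
  next
    assume h: "inj ?c \<and> vec.independent (columns M)"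
    hence ic: "inj ?c" by blast
    have "\<forall>i. c i = 0" if hc: "(\<Sum>i\<in>UNIV. c i *s ?c i) = 0" for c
    proof -
      define u where "u v = c (inv ?c v)" for v
      have "(\<Sum>v\<in>columns M. u v *s v) = (\<Sum>i\<in>UNIV. u (?c i) *s ?c i)"
        unfolding colr by (simp add: sum.reindex[OF ic])
      also have "\<dots> = 0" using hc by (simp add: u_def inv_f_f[OF ic])
      finally have "\<forall>v\<in>columns M. u v = 0"
        using vec.dependent_finite[OF fin] h by blast
      thus ?thesis unfolding colr u_def by (auto simp: inv_f_f[OF ic])
    qed
    thus "inj ((*v) M)" using trivial_kernel by blast
  qed
qed

lemma inj_column_if_card_columns:
  fixes M :: "'a^'n::finite^'m"
  assumes "card (columns M) = CARD('n)"
  shows "inj (\<lambda>j. column j M)"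
proof -
  have "columns M = range (\<lambda>j. column j M)" unfolding columns_def by auto
  thus ?thesis using assms eq_card_imp_inj_on[of UNIV "\<lambda>j. column j M"] by simp
qed

lemma SIV_opt_le:
  fixes A :: "'a::field^'n^'m::finite"
  assumes "a \<in> colspace A - vec.span T"
  shows "SIV_opt A T \<le> vnnz a"
proof -
  have "{vnnz a | a. a \<in> colspace A - vec.span T} \<subseteq> {..CARD('m)}"
    unfolding vnnz_def by (auto intro!: card_mono)
  hence "finite {vnnz a | a. a \<in> colspace A - vec.span T}" using finite_subset by blast
  thus ?thesis unfolding SIV_opt_def by (rule Min_le) (use assms in blast)
qed

lemma SIV_opt_le_escaping_vector:
  fixes A :: "'a::field^'n^'m::finite"
  assumes indep: "vec.independent S" and S_in: "S \<subseteq> colspace A"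
    and finT: "finite T" and card_less: "card T < card S"
  shows "\<exists>c\<in>S. SIV_opt A T \<le> vnnz c"
proof -
  have "\<not> S \<subseteq> vec.span T"
    using vec.independent_span_bound[OF finT indep] card_less by auto
  then obtain c where "c \<in> S" "c \<notin> vec.span T" by blast
  thus ?thesis using S_in SIV_opt_le by blast
qed

text \<open>The columns of M are sorted by nonzero count; the k-th smallest column
  count bounds the k-th optimum.\<close>
lemma sum_SIV_opt_le_mnnz:
  fixes A :: "'a::field^'n^'m::finite" and M :: "'a^'n::finite^'m"
  assumes injM: "inj ((*v) M)" and cols_in: "columns M \<subseteq> colspace A"
    and finT: "\<And>k. finite (T k)" and card_T: "\<And>k. k \<in> {1..CARD('n)} \<Longrightarrow> card (T k) < k"
  shows "(\<Sum>k\<in>{1..CARD('n)}. SIV_opt A (T k)) \<le> mnnz M"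
proof -
  let ?n = "CARD('n)"
  define f where "f j = vnnz (column j M)" for j
  have injc: "inj (\<lambda>j. column j M)" and indM: "vec.independent (columns M)"
    using injM inj_iff_columns_independent by blast+
  obtain xs where xs: "set xs = (UNIV::'n set)" "distinct xs"
    using finite_distinct_list[of "UNIV::'n set"] by auto
  define ys where "ys = sort_key f xs"
  have ys: "set ys = UNIV" "distinct ys" "sorted (map f ys)" "length ys = ?n"
    using xs distinct_card[of xs] by (simp_all add: ys_def length_sort)
  have bound: "SIV_opt A (T k) \<le> f (ys ! (k - 1))" if k: "k \<in> {1..?n}" for k
  proof -
    let ?S = "(\<lambda>i. column (ys ! i) M) ` {..<k}"
    have "inj_on (\<lambda>i. column (ys ! i) M) {..<k}"
      using injc ys(2,4) k by (auto intro!: inj_onI dest: injD simp: nth_eq_iff_index_eq)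
    hence "card ?S = k" by (simp add: card_image)
    moreover have "?S \<subseteq> columns M" unfolding columns_def by auto
    ultimately obtain i where i: "i < k" "SIV_opt A (T k) \<le> f (ys ! i)"
      using SIV_opt_le_escaping_vector[of ?S A "T k"] vec.independent_mono[OF indM]
        cols_in finT card_T[OF k] unfolding f_def by fastforce
    have "f (ys ! i) \<le> f (ys ! (k - 1))"
      using sorted_nth_mono[OF ys(3), of i "k - 1"] i k ys(4) by auto
    with i show ?thesis by linarith
  qed
  have "(\<Sum>k\<in>{1..?n}. SIV_opt A (T k)) \<le> (\<Sum>k\<in>{1..?n}. f (ys ! (k - 1)))"
    by (rule sum_mono) (rule bound)
  also have "\<dots> = (\<Sum>i<?n. f (ys ! i))"
  proof -
    have "{1..?n} = Suc ` {..<?n}" by (simp add: image_Suc_lessThan)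
    thus ?thesis by (simp add: sum.reindex)
  qed
  also have "\<dots> = sum f ((!) ys ` {..<?n})"
    using ys(2,4) by (simp add: sum.reindex inj_on_nth)
  also have "(!) ys ` {..<?n} = UNIV" using ys(1,4) by (auto simp: set_conv_nth)
  also have "sum f UNIV = mnnz M" by (simp add: f_def mnnz_eq_sum_columns)
  finally show ?thesis .
qed

lemma greedy_sequence_independent:
  fixes b :: "nat \<Rightarrow> 'a::field^'m"
  assumes "\<And>k. k \<in> {1..n} \<Longrightarrow> b k \<notin> vec.span (b ` {1..<k})"
  shows "vec.independent (b ` {1..n}) \<and> inj_on b {1..n}"
  using assms
proof (induction n)
  case 0
  thus ?case by (simp add: vec.independent_empty)
next
  case (Suc n)
  have IH: "vec.independent (b ` {1..n}) \<and> inj_on b {1..n}"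
    using Suc by simp
  have "b (Suc n) \<notin> vec.span (b ` {1..n})"
    using Suc.prems[of "Suc n"] by (simp add: atLeastLessThanSuc_atLeastAtMost)
  moreover have "b (Suc n) \<notin> b ` {1..n}" using calculation vec.span_base by blast
  moreover have "{1..Suc n} = insert (Suc n) {1..n}" by auto
  ultimately show ?case
    using IH by (auto simp: vec.independent_insert)
qed

lemma factor_through_colspace:
  fixes A :: "'a::field^'n^'m" and N :: "'a^'k^'m"
  assumes injN: "inj ((*v) N)" and cols_in: "columns N \<subseteq> colspace A"
  shows "\<exists>X :: 'a^'k^'n. inj ((*v) X) \<and> N = A ** X"
proof -
  have "\<exists>x. column j N = A *v x" for j
    using cols_in colspace_eq_range unfolding columns_def by blast
  then obtain x where x: "\<And>j. column j N = A *v x j" by metis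
  define X :: "'a^'k^'n" where "X = (\<chi> i j. x j $ i)"
  have NAX: "N = A ** X"
  proof -
    have "N $ i $ j = (A ** X) $ i $ j" for i j
      using x[of j] by (simp add: vec_eq_iff column_def matrix_matrix_mult_def
          matrix_vector_mult_def X_def)
    thus ?thesis by (simp add: vec_eq_iff)
  qed
  have "inj ((*v) X)"
  proof (rule injI)
    fix y z assume "X *v y = X *v z"
    hence "N *v y = N *v z" by (simp add: NAX flip: matrix_vector_mul_assoc)
    thus "y = z" using injN by (meson injD)
  qed
  with NAX show ?thesis by blast
qed

lemma invertible_iff_inj:
  fixes X :: "'a::field^'n::finite^'n"
  shows "invertible X \<longleftrightarrow> inj ((*v) X)"
  using invertible_left_inverse matrix_left_invertible_injective by blast

lemma sparsification_opt_attained: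
  fixes A :: "'a::field^'n::finite^'m::finite"
  obtains Y :: "'a^'n^'n" where "invertible Y"
    and "Min {mnnz (A ** Y) | Y :: 'a^'n^'n. invertible Y} = mnnz (A ** Y)"
proof -
  let ?S = "{mnnz (A ** Y) | Y :: 'a^'n^'n. invertible Y}"
  have "mnnz (A ** Y) \<le> card (UNIV :: ('m \<times> 'n) set)" for Y :: "'a^'n^'n"
    unfolding mnnz_def by (rule card_mono) auto
  hence "finite ?S" by (auto intro: finite_subset[of _ "{..card (UNIV :: ('m \<times> 'n) set)}"])
  moreover have "invertible (mat 1 :: 'a^'n^'n)"
    using invertible_left_inverse matrix_mul_lid by blast
  hence "?S \<noteq> {}" by blast
  ultimately have "Min ?S \<in> ?S" by (rule Min_in)
  thus ?thesis using that by blast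
qed

theorem mainTheorem10:
  fixes lam :: real
    and A :: "rat^'n::finite^'m::finite"
    and As :: "nat \<Rightarrow> rat^'n^'m"
    and bs :: "nat \<Rightarrow> rat^'m"
    and js :: "nat \<Rightarrow> 'n"
    and N :: "rat^'n^'m"
  assumes lam: "lam \<ge> 1"
    and full_rank: "rank A = CARD('n)"
    and init: "As 0 = A"
    and b_indep: "\<And>k. k \<in> {1..CARD('n)} \<Longrightarrow>
        bs k \<in> colspace A - vec.span (bs ` {1..<k})"
    and b_approx: "\<And>k. k \<in> {1..CARD('n)} \<Longrightarrow>
        real (vnnz (bs k)) \<le> lam * real (SIV_opt A (bs ` {1..<k}))"
    and j_notin: "\<And>k. k \<in> {1..CARD('n)} \<Longrightarrow>
        column (js k) (As (k - 1)) \<notin> bs ` {1..<k}"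
    and span_pres: "\<And>k. k \<in> {1..CARD('n)} \<Longrightarrow>
        colspace (replace_col (As (k - 1)) (js k) (bs k)) = colspace (As (k - 1))"
    and step: "\<And>k. k \<in> {1..CARD('n)} \<Longrightarrow>
        As k = replace_col (As (k - 1)) (js k) (bs k)"
    and N_cols: "columns N = bs ` {1..CARD('n)}"
  shows "(\<exists>X :: rat^'n^'n. invertible X \<and> N = A ** X) \<and>
         real (mnnz N) \<le> lam * real (Min {mnnz (A ** Y) | Y :: rat^'n^'n. invertible Y})"
proof -
  let ?n = "CARD('n)"
  have indep: "vec.independent (columns N)" and inj_bs: "inj_on bs {1..?n}"
    using greedy_sequence_independent[of ?n bs] b_indep N_cols by auto
  have inj_cols: "inj (\<lambda>j. column j N)"
    using inj_column_if_card_columns[of N] card_image[OF inj_bs] N_cols by simp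
  have cols_in: "columns N \<subseteq> colspace A" using N_cols b_indep by auto
  have factor: "\<exists>X :: rat^'n^'n. invertible X \<and> N = A ** X"
    using factor_through_colspace[OF _ cols_in] inj_iff_columns_independent indep inj_cols
      invertible_iff_inj by metis
  obtain Y :: "rat^'n^'n" where Y: "invertible Y"
    and opt: "Min {mnnz (A ** Y) | Y :: rat^'n^'n. invertible Y} = mnnz (A ** Y)"
    by (rule sparsification_opt_attained)
  have "(*v) (A ** Y) = (*v) A \<circ> (*v) Y" by (simp add: fun_eq_iff matrix_vector_mul_assoc)
  hence "inj ((*v) (A ** Y))"
    using full_rank_imp_inj[OF full_rank] Y invertible_iff_inj inj_compose by metis
  moreover have "columns (A ** Y) \<subseteq> colspace A"
    by (auto simp: columns_def colspace_eq_range simp flip: column_eq_mult_axis matrix_vector_mul_assoc)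
  ultimately have greedy_le_opt: "(\<Sum>k\<in>{1..?n}. SIV_opt A (bs ` {1..<k})) \<le> mnnz (A ** Y)"
  proof (rule sum_SIV_opt_le_mnnz)
    show "card (bs ` {1..<k}) < k" if "k \<in> {1..?n}" for k
      using card_image_le[of "{1..<k}" bs] that by fastforce
  qed simp
  have "real (mnnz N) = (\<Sum>k\<in>{1..?n}. real (vnnz (bs k)))"
    using mnnz_eq_sum_column_set[OF inj_cols] N_cols sum.reindex[OF inj_bs, of vnnz] by simp
  also have "\<dots> \<le> (\<Sum>k\<in>{1..?n}. lam * real (SIV_opt A (bs ` {1..<k})))"
    by (rule sum_mono) (rule b_approx)
  also have "\<dots> \<le> lam * real (mnnz (A ** Y))"
    using greedy_le_opt lam by (simp flip: sum_distrib_left of_nat_sum)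
  finally show ?thesis using factor opt by simp
qed

end
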